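(* Let $r \ge 2$, $t \ge 2$ and $k \ge 1$ be integers, and let $G$ be a graph on $n$ vertices with $n > (r-1)(t-1)k$. Set $x = \lceil n/(r-1) \rceil$ and suppose $$\delta(G) \ge n - x + \left\lfloor \frac{x}{k+1} \right\rfloor$$ (equivalently, $\delta(G) \ge n - \lceil \frac{k}{k+1} x\rceil$). Suppose the edges of $G$ are coloured red and blue so that there is no blue path on $t$ vertices, and let $R$ be the spanning subgraph of $G$ formed by the red edges. Then the independence number of $R$ satisfies $\alpha(R) \le x-1$; that is, every set of $x$ vertices of $G$ contains two vertices joined by a red edge.
   Context: $\delta(G)$ is the minimum degree of $G$; $\alpha(R)$ is the maximum size of a set of pairwise non-adjacent vertices in $R$. A blue path on $t$ vertices means a path with $t$ vertices all of whose edges are blue edges of $G$. *)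

theory Defs
  imports Complex_Main
begin

definition simple_graph :: "'a set \<Rightarrow> ('a \<Rightarrow> 'a \<Rightarrow> bool) \<Rightarrow> bool" where
  "simple_graph V E \<longleftrightarrow> finite V \<and> (\<forall>u v. E u v \<longrightarrow> u \<in> V \<and> v \<in> V \<and> u \<noteq> v \<and> E v u)"

definition degree :: "'a set \<Rightarrow> ('a \<Rightarrow> 'a \<Rightarrow> bool) \<Rightarrow> 'a \<Rightarrow> nat" where
  "degree V E v = card {u \<in> V. E v u}"

definition min_degree :: "'a set \<Rightarrow> ('a \<Rightarrow> 'a \<Rightarrow> bool) \<Rightarrow> nat" where
  "min_degree V E = Min (degree V E ` V)"

definition independent_set :: "('a \<Rightarrow> 'a \<Rightarrow> bool) \<Rightarrow> 'a set \<Rightarrow> bool" where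
  "independent_set E S \<longleftrightarrow> (\<forall>u\<in>S. \<forall>v\<in>S. \<not> E u v)"

definition independence_number :: "'a set \<Rightarrow> ('a \<Rightarrow> 'a \<Rightarrow> bool) \<Rightarrow> nat" where
  "independence_number V E = Max (card ` {S. S \<subseteq> V \<and> independent_set E S})"

definition has_path_on :: "'a set \<Rightarrow> ('a \<Rightarrow> 'a \<Rightarrow> bool) \<Rightarrow> nat \<Rightarrow> bool" where
  "has_path_on V P t \<longleftrightarrow> (\<exists>ps. length ps = t \<and> distinct ps \<and> set ps \<subseteq> V \<and>
      (\<forall>i. i + 1 < t \<longrightarrow> P (ps ! i) (ps ! (i + 1))))"

end

theory Submission
  imports Defs
begin

(* Let S be a set of x vertices that is independent in R. All edges of G inside S are blue and
   each vertex of S has at most n - x neighbours outside S, so the blue graph on S has minimum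
   degree at least d = x div (k + 1) and no path on t vertices; moreover x > (t - 1) k forces
   t <= 2 d + 1. A longest path in such a graph has at most 2 d vertices, so, as in Dirac's
   theorem, the neighbourhoods of its endpoints cross and its vertices carry a cycle; by
   maximality no vertex of that cycle has a neighbour off it, so it is a whole component.
   Hence the blue graph on S splits into m components of between d + 1 and t - 1 vertices.
   Now x <= m (t - 1) and x > (t - 1) k give m >= k + 1, whence x >= (k + 1)(d + 1) > x. *)

definition path_in :: "'a set \<Rightarrow> ('a \<Rightarrow> 'a \<Rightarrow> bool) \<Rightarrow> 'a list \<Rightarrow> bool" where
  "path_in S H ps \<longleftrightarrow> distinct ps \<and> set ps \<subseteq> S \<and> successively H ps"

definition successively_cyclic :: "('a \<Rightarrow> 'a \<Rightarrow> bool) \<Rightarrow> 'a list \<Rightarrow> bool" where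
  "successively_cyclic H c \<longleftrightarrow> successively H c \<and> H (last c) (hd c)"

lemma has_path_on_mono:
  assumes "S \<subseteq> S'" "has_path_on S H t"
  shows "has_path_on S' H t"
  using assms unfolding has_path_on_def by blast

lemma has_path_on_if_path_in:
  assumes "path_in S H ps" "t \<le> length ps"
  shows "has_path_on S H t"
  unfolding has_path_on_def
proof (intro exI[of _ "take t ps"] conjI allI impI)
  show "length (take t ps) = t" "distinct (take t ps)" "set (take t ps) \<subseteq> S"
    using assms set_take_subset[of t ps] by (auto simp: path_in_def)
  fix i assume "i + 1 < t"
  then show "H (take t ps ! i) (take t ps ! (i + 1))"
    using assms successively_nth[of H ps i] by (simp add: path_in_def)
qed

lemma longest_path_in_exists:
  assumes "finite S" "a \<in> S"
  shows "\<exists>ps. path_in S H ps \<and> (\<forall>qs. path_in S H qs \<longrightarrow> length qs \<le> length ps)"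
proof (rule Lattices_Big.ex_has_greatest_nat[of _ "[a]" _ "Suc (card S)"])
  show "path_in S H [a]"
    using assms(2) by (simp add: path_in_def)
  show "\<forall>qs. path_in S H qs \<longrightarrow> length qs < Suc (card S)"
    using assms(1) by (metis card_mono distinct_card path_in_def less_Suc_eq_le)
qed

lemma successively_cyclic_rotate1:
  assumes "successively_cyclic H c"
  shows "successively_cyclic H (rotate1 c)"
proof (cases c)
  case (Cons a xs)
  then show ?thesis
    using assms
    by (cases "xs = []") (auto simp: successively_cyclic_def successively_append_iff successively_Cons)
qed (use assms in simp)

lemma successively_cyclic_rotate:
  assumes "successively_cyclic H c"
  shows "successively_cyclic H (rotate n c)"
  by (induction n) (simp_all add: assms successively_cyclic_rotate1)

lemma successively_cyclic_crossing:
  assumes sym: "\<forall>u v. H u v \<longrightarrow> H v u" and ps: "successively H ps" and i: "i + 1 < length ps"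
    and first: "H (hd ps) (ps ! (i + 1))" and last: "H (last ps) (ps ! i)"
  shows "successively_cyclic H (take (i + 1) ps @ rev (drop (i + 1) ps))"
proof -
  define A where "A = take (i + 1) ps"
  define B where "B = rev (drop (i + 1) ps)"
  have "successively H A" "successively H (drop (i + 1) ps)"
    unfolding A_def using ps by (metis append_take_drop_id successively_append_iff)+
  then have "successively H B"
    unfolding B_def using sym by (auto intro: successively_mono)
  moreover have "hd A = hd ps"
    unfolding A_def by (cases ps) auto
  moreover have "A \<noteq> []" "B \<noteq> []" "last A = ps ! i"
    "hd B = last ps" "last B = ps ! (i + 1)"
    unfolding A_def B_def using i
    by (auto simp: take_Suc_conv_app_nth hd_rev last_rev hd_drop_conv_nth)
  ultimately have "successively_cyclic H (A @ B)"
    using \<open>successively H A\<close> sym first last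
    by (auto simp: successively_cyclic_def successively_append_iff)
  then show ?thesis
    unfolding A_def B_def .
qed

lemma crossing_index_exists:
  assumes irr: "\<forall>u. \<not> H u u" and ne: "ps \<noteq> []" and len: "length ps \<le> 2 * d"
    and first: "d \<le> card {u \<in> set ps. H (hd ps) u}"
    and last: "d \<le> card {u \<in> set ps. H (last ps) u}"
  shows "\<exists>i. i + 1 < length ps \<and> H (hd ps) (ps ! (i + 1)) \<and> H (last ps) (ps ! i)"
proof -
  define p where "p = length ps"
  define IA where "IA = {i. i < p - 1 \<and> H (hd ps) (ps ! (i + 1))}"
  define IB where "IB = {i. i < p - 1 \<and> H (last ps) (ps ! i)}"
  have finite: "finite IA" "finite IB"
    unfolding IA_def IB_def by auto
  have "{u \<in> set ps. H (hd ps) u} \<subseteq> (\<lambda>i. ps ! (i + 1)) ` IA"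
  proof
    fix u assume u: "u \<in> {u \<in> set ps. H (hd ps) u}"
    then obtain j where j: "j < p" "ps ! j = u"
      by (auto simp: in_set_conv_nth p_def)
    have "j \<noteq> 0"
      using u j irr ne by (metis (mono_tags) hd_conv_nth mem_Collect_eq)
    then show "u \<in> (\<lambda>i. ps ! (i + 1)) ` IA"
      using j u unfolding IA_def by (intro image_eqI[of _ _ "j - 1"]) auto
  qed
  then have "d \<le> card IA"
    using first finite card_image_le[of IA] card_mono[OF finite_imageI] by (meson le_trans)
  have "{u \<in> set ps. H (last ps) u} \<subseteq> (\<lambda>i. ps ! i) ` IB"
  proof
    fix u assume u: "u \<in> {u \<in> set ps. H (last ps) u}"
    then obtain j where j: "j < p" "ps ! j = u"
      by (auto simp: in_set_conv_nth p_def)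
    have "j \<noteq> p - 1"
      using u j irr ne by (auto simp: last_conv_nth p_def)
    then show "u \<in> (\<lambda>i. ps ! i) ` IB"
      using j u unfolding IB_def by auto
  qed
  then have "d \<le> card IB"
    using last finite card_image_le[of IB] card_mono[OF finite_imageI] by (meson le_trans)
  have "card (IA \<union> IB) \<le> p - 1"
    using card_mono[of "{..<p - 1}" "IA \<union> IB"] unfolding IA_def IB_def by auto
  moreover have "0 < p"
    using ne by (simp add: p_def)
  ultimately have "card (IA \<inter> IB) \<noteq> 0"
    using card_Un_Int[OF finite] \<open>d \<le> card IA\<close> \<open>d \<le> card IB\<close> len
    unfolding p_def by linarith
  then have "IA \<inter> IB \<noteq> {}"
    by force
  then show ?thesis
    unfolding IA_def IB_def p_def by auto
qed

lemma cycle_extends_to_longer_path: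
  assumes sym: "\<forall>u v. H u v \<longrightarrow> H v u" and c: "successively_cyclic H c" "distinct c"
    and u: "u \<in> set c" and uw: "H u w" and w: "w \<notin> set c"
  shows "\<exists>ps. path_in (insert w (set c)) H ps \<and> length ps = length c + 1"
proof -
  obtain j where j: "j < length c" "c ! j = u"
    using u by (auto simp: in_set_conv_nth)
  define c' where "c' = rotate j c"
  have "c \<noteq> []"
    using u by auto
  then have "hd c' = u"
    unfolding c'_def using j by (simp add: hd_rotate_conv_nth)
  moreover have "successively H c'"
    using successively_cyclic_rotate[OF c(1)] unfolding c'_def successively_cyclic_def by blast
  moreover have "set c' = set c" "distinct c'" "length c' = length c"
    unfolding c'_def using c(2) by auto
  ultimately have "path_in (insert w (set c)) H (w # c')"
    using \<open>c \<noteq> []\<close> uw w sym by (auto simp: path_in_def successively_Cons c'_def)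
  then show ?thesis
    using \<open>length c' = length c\<close> by fastforce
qed

lemma path_closes_to_cycle:
  assumes sym: "\<forall>u v. H u v \<longrightarrow> H v u" and irr: "\<forall>u. \<not> H u u"
    and ps: "successively H ps" "distinct ps" "ps \<noteq> []" and len: "length ps \<le> 2 * d"
    and "d \<le> card {u \<in> set ps. H (hd ps) u}" "d \<le> card {u \<in> set ps. H (last ps) u}"
  shows "\<exists>c. successively_cyclic H c \<and> distinct c \<and> set c = set ps"
proof -
  obtain i where i: "i + 1 < length ps" "H (hd ps) (ps ! (i + 1))" "H (last ps) (ps ! i)"
    using crossing_index_exists[of H ps d] irr ps(3) len assms(7,8) by blast
  define c where "c = take (i + 1) ps @ rev (drop (i + 1) ps)"
  have "successively_cyclic H c"
    unfolding c_def using successively_cyclic_crossing[OF sym ps(1) i] .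
  moreover have "distinct c"
    unfolding c_def using ps(2) by (metis append_take_drop_id distinct_append distinct_rev set_rev)
  moreover have "set c = set ps"
    unfolding c_def by (metis set_append set_rev append_take_drop_id)
  ultimately show ?thesis
    by blast
qed

lemma longest_path_in_endpoint_neighbours:
  assumes sym: "\<forall>u v. H u v \<longrightarrow> H v u" and ps: "path_in S H ps" "ps \<noteq> []"
    and longest: "\<forall>qs. path_in S H qs \<longrightarrow> length qs \<le> length ps"
  shows "\<forall>w\<in>S. H (hd ps) w \<longrightarrow> w \<in> set ps"
    and "\<forall>w\<in>S. H (last ps) w \<longrightarrow> w \<in> set ps"
proof -
  show "\<forall>w\<in>S. H (hd ps) w \<longrightarrow> w \<in> set ps"
  proof (intro ballI impI, rule ccontr)
    fix w assume "w \<in> S" "H (hd ps) w" "w \<notin> set ps"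
    then have "path_in S H (w # ps)"
      using ps sym by (auto simp: path_in_def successively_Cons)
    then show False
      using longest by fastforce
  qed
  show "\<forall>w\<in>S. H (last ps) w \<longrightarrow> w \<in> set ps"
  proof (intro ballI impI, rule ccontr)
    fix w assume "w \<in> S" "H (last ps) w" "w \<notin> set ps"
    then have "path_in S H (ps @ [w])"
      using ps by (auto simp: path_in_def successively_append_iff)
    then show False
      using longest by fastforce
  qed
qed

lemma small_closed_subset_exists:
  assumes sym: "\<forall>u v. H u v \<longrightarrow> H v u" and irr: "\<forall>u. \<not> H u u"
    and S: "finite S" "S \<noteq> {}" and deg: "\<forall>v\<in>S. d \<le> card {u \<in> S. H v u}"
    and no_path: "\<not> has_path_on S H t" and t: "t \<le> 2 * d + 1"
  shows "\<exists>T\<subseteq>S. T \<noteq> {} \<and> card T < t \<and> (\<forall>u\<in>T. \<forall>w\<in>S. H u w \<longrightarrow> w \<in> T)"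
proof -
  obtain a where "a \<in> S"
    using S(2) by blast
  then obtain ps where ps: "path_in S H ps"
    and longest: "\<forall>qs. path_in S H qs \<longrightarrow> length qs \<le> length ps"
    using longest_path_in_exists[OF S(1)] by blast
  have "ps \<noteq> []"
    using longest[rule_format, of "[a]"] \<open>a \<in> S\<close> by (auto simp: path_in_def)
  have "length ps < t"
    using no_path has_path_on_if_path_in[OF ps] by (meson not_less)
  have "d \<le> card {u \<in> set ps. H v u}"
    if "v \<in> set ps" "\<forall>w\<in>S. H v w \<longrightarrow> w \<in> set ps" for v
  proof -
    have "d \<le> card {u \<in> S. H v u}"
      using deg that(1) ps by (auto simp: path_in_def)
    also have "\<dots> \<le> card {u \<in> set ps. H v u}"
      using that(2) by (intro card_mono) auto
    finally show ?thesis .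
  qed
  then obtain c where c: "successively_cyclic H c" "distinct c" "set c = set ps"
    using path_closes_to_cycle[OF sym irr _ _ \<open>ps \<noteq> []\<close>, of d] ps \<open>length ps < t\<close> t
      longest_path_in_endpoint_neighbours[OF sym ps \<open>ps \<noteq> []\<close> longest] \<open>ps \<noteq> []\<close>
    by (auto simp: path_in_def)
  have closed: "w \<in> set ps" if u: "u \<in> set ps" and w: "w \<in> S" and uw: "H u w" for u w
  proof (rule ccontr)
    assume "w \<notin> set ps"
    then obtain qs where "path_in (insert w (set c)) H qs" "length qs = length c + 1"
      using cycle_extends_to_longer_path[OF sym c(1,2), of u w] u uw c(3) by auto
    moreover have "insert w (set c) \<subseteq> S" "length c = length ps"
      using ps w c(2,3) by (auto simp: path_in_def distinct_card[symmetric])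
    ultimately have "path_in S H qs" "length qs = length ps + 1"
      by (auto simp: path_in_def)
    then show False
      using longest by fastforce
  qed
  show ?thesis
    using ps \<open>ps \<noteq> []\<close> \<open>length ps < t\<close> closed
    by (intro exI[of _ "set ps"]) (auto simp: path_in_def distinct_card)
qed

lemma component_count_bounds:
  assumes sym: "\<forall>u v. H u v \<longrightarrow> H v u" and irr: "\<forall>u. \<not> H u u" and t: "t \<le> 2 * d + 1"
    and "finite S" "\<forall>v\<in>S. d \<le> card {u \<in> S. H v u}" "\<not> has_path_on S H t"
  shows "\<exists>m. m * (d + 1) \<le> card S \<and> card S \<le> m * (t - 1)"
  using assms(4-6)
proof (induction "card S" arbitrary: S rule: less_induct)
  case less
  show ?case
  proof (cases "S = {}")
    case True
    then show ?thesis by auto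
  next
    case False
    obtain T where T: "T \<subseteq> S" "T \<noteq> {}" "card T < t"
      and closed: "\<forall>u\<in>T. \<forall>w\<in>S. H u w \<longrightarrow> w \<in> T"
      using small_closed_subset_exists[OF sym irr less.prems(1) False less.prems(2,3) t] by blast
    have "finite T"
      using T(1) less.prems(1) finite_subset by blast
    obtain u where "u \<in> T"
      using T(2) by blast
    have "d \<le> card {w \<in> S. H u w}"
      using less.prems(2) \<open>u \<in> T\<close> T(1) by blast
    also have "\<dots> \<le> card (T - {u})"
      using closed \<open>u \<in> T\<close> irr \<open>finite T\<close> by (intro card_mono) auto
    finally have "d + 1 \<le> card T"
      using card_Diff1_less[OF \<open>finite T\<close> \<open>u \<in> T\<close>] by linarith
    have "{w \<in> S - T. H v w} = {w \<in> S. H v w}" if "v \<in> S - T" for v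
      using that closed sym by blast
    then have "\<forall>v\<in>S - T. d \<le> card {w \<in> S - T. H v w}"
      using less.prems(2) by simp
    moreover have "\<not> has_path_on (S - T) H t"
      using less.prems(3) has_path_on_mono[of "S - T" S] by blast
    moreover have card_S: "card S = card T + card (S - T)"
      using card_Diff_subset[OF \<open>finite T\<close> T(1)] card_mono[OF less.prems(1) T(1)] by simp
    moreover have "card (S - T) < card S"
      using card_S \<open>d + 1 \<le> card T\<close> by simp
    ultimately obtain m where "m * (d + 1) \<le> card (S - T)" "card (S - T) \<le> m * (t - 1)"
      using less.hyps less.prems(1) by blast
    then show ?thesis
      using card_S \<open>d + 1 \<le> card T\<close> \<open>card T < t\<close> by (intro exI[of _ "m + 1"]) auto
  qed
qed

lemma le_double_div_Suc_add_one:
  fixes x k t :: nat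
  assumes "1 \<le> k" "(t - 1) * k < x"
  shows "t \<le> 2 * (x div (k + 1)) + 1"
proof (rule ccontr)
  define q where "q = x div (k + 1)"
  assume "\<not> t \<le> 2 * (x div (k + 1)) + 1"
  then have "(2 * q + 1) * k \<le> (t - 1) * k"
    unfolding q_def by (intro mult_le_mono1) simp
  moreover have "x = q * (k + 1) + x mod (k + 1)"
    unfolding q_def by (metis div_mult_mod_eq)
  moreover have "x mod (k + 1) \<le> k"
    by (simp add: less_Suc_eq_le)
  moreover have "q \<le> q * k"
    using assms(1) by simp
  moreover have "(2 * q + 1) * k = 2 * (q * k) + k" "q * (k + 1) = q * k + q"
    by (simp_all add: algebra_simps)
  ultimately show False
    using assms(2) by linarith
qed

lemma low_degree_vertex_if_no_long_path:
  assumes sym: "\<forall>u v. H u v \<longrightarrow> H v u" and irr: "\<forall>u. \<not> H u u"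
    and S: "finite S" and k: "1 \<le> k" and large: "(t - 1) * k < card S"
    and no_path: "\<not> has_path_on S H t"
  shows "\<exists>v\<in>S. card {u \<in> S. H v u} < card S div (k + 1)"
proof (rule ccontr)
  define x where "x = card S"
  define d where "d = x div (k + 1)"
  assume "\<not> ?thesis"
  then have deg: "\<forall>v\<in>S. d \<le> card {u \<in> S. H v u}"
    by (auto simp: not_less d_def x_def)
  have "t \<le> 2 * d + 1"
    unfolding d_def x_def using le_double_div_Suc_add_one[OF k large] .
  then obtain m where m: "m * (d + 1) \<le> x" "x \<le> m * (t - 1)"
    using component_count_bounds[OF sym irr _ S deg no_path] unfolding x_def by blast
  have "k < m"
  proof (rule ccontr)
    assume "\<not> k < m"
    then have "m * (t - 1) \<le> (t - 1) * k"
      by (simp add: mult.commute)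
    then show False
      using m(2) large x_def by linarith
  qed
  then have "(k + 1) * (d + 1) \<le> x"
    using m(1) mult_le_mono1[of "k + 1" m "d + 1"] by simp
  moreover have "x = d * (k + 1) + x mod (k + 1)"
    unfolding d_def by (metis div_mult_mod_eq)
  moreover have "x mod (k + 1) < k + 1" "(k + 1) * (d + 1) = d * (k + 1) + (k + 1)"
    by (simp_all add: algebra_simps)
  ultimately show False
    by linarith
qed

lemma less_nat_ceiling_divide:
  fixes a m n :: nat
  assumes "0 < m" "m * a < n"
  shows "a < nat \<lceil>real n / real m\<rceil>"
proof -
  define y where "y = nat \<lceil>real n / real m\<rceil>"
  have "real n / real m \<le> real y"
    unfolding y_def by linarith
  then have "real n \<le> real (m * y)"
    using assms(1) by (simp add: pos_divide_le_eq mult.commute)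
  then have "m * a < m * y"
    using assms(2) by linarith
  then show ?thesis
    unfolding y_def by simp
qed

lemma blue_degree_in_red_independent_set:
  assumes "finite V" "S \<subseteq> V" "independent_set (\<lambda>u v. E u v \<and> \<not> blue u v) S" "v \<in> S"
    and "card V - card S + d \<le> min_degree V E"
  shows "d \<le> card {u \<in> S. blue v u}"
proof -
  have "min_degree V E \<le> degree V E v"
    unfolding min_degree_def using assms(1,2,4) by (intro Min_le) auto
  also have "\<dots> \<le> card ((V - S) \<union> {u \<in> S. blue v u})"
    unfolding degree_def using assms(1-4)
    by (intro card_mono) (auto intro: rev_finite_subset simp: independent_set_def)
  also have "\<dots> \<le> card (V - S) + card {u \<in> S. blue v u}"
    by (rule card_Un_le)
  also have "card (V - S) = card V - card S"
    using assms(1,2) by (meson card_Diff_subset finite_subset)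
  finally show ?thesis
    using assms(5) by linarith
qed

lemma card_red_independent_set_less:
  assumes V: "finite V" and sym: "\<forall>u v. blue u v \<longrightarrow> blue v u" and irr: "\<forall>u. \<not> blue u u"
    and k: "1 \<le> k" and large: "(t - 1) * k < x"
    and deg: "card V - x + x div (k + 1) \<le> min_degree V E"
    and no_path: "\<not> has_path_on V blue t"
    and S: "S \<subseteq> V" "independent_set (\<lambda>u v. E u v \<and> \<not> blue u v) S"
  shows "card S < x"
proof (rule ccontr)
  assume "\<not> card S < x"
  then obtain S0 where S0: "S0 \<subseteq> S" "card S0 = x"
    using obtain_subset_with_card_n[of x S] by (auto simp: not_less)
  have "S0 \<subseteq> V"
    using S(1) S0(1) by blast
  have "independent_set (\<lambda>u v. E u v \<and> \<not> blue u v) S0"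
    using S(2) S0(1) unfolding independent_set_def by blast
  have "finite S0"
    using \<open>S0 \<subseteq> V\<close> V by (rule finite_subset)
  moreover have "\<not> has_path_on S0 blue t"
    using no_path has_path_on_mono[OF \<open>S0 \<subseteq> V\<close>] by blast
  ultimately obtain v where v: "v \<in> S0" "card {u \<in> S0. blue v u} < x div (k + 1)"
    using low_degree_vertex_if_no_long_path[OF sym irr _ k] S0(2) large by metis
  have "x div (k + 1) \<le> card {u \<in> S0. blue v u}"
    using blue_degree_in_red_independent_set[OF V \<open>S0 \<subseteq> V\<close> _ v(1)] deg S0(2)
      \<open>independent_set (\<lambda>u v. E u v \<and> \<not> blue u v) S0\<close> by simp
  then show False
    using v(2) by simp
qed

theorem mainTheorem3:
  fixes V :: "'a set" and E blue :: "'a \<Rightarrow> 'a \<Rightarrow> bool" and r t k n x :: nat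
  assumes "simple_graph V E"
    and "r \<ge> 2" and "t \<ge> 2" and "k \<ge> 1"
    and "card V = n"
    and "n > (r - 1) * (t - 1) * k"
    and "x = nat \<lceil>real n / real (r - 1)\<rceil>"
    and "min_degree V E \<ge> n - x + x div (k + 1)"
    and blue_sub: "\<forall>u v. blue u v \<longrightarrow> E u v"
    and blue_sym: "\<forall>u v. blue u v \<longrightarrow> blue v u"
    and "\<not> has_path_on V blue t"
  shows "independence_number V (\<lambda>u v. E u v \<and> \<not> blue u v) \<le> x - 1"
proof -
  let ?R = "\<lambda>u v. E u v \<and> \<not> blue u v"
  have V: "finite V" and irr: "\<forall>u. \<not> blue u u"
    using assms(1) blue_sub unfolding simple_graph_def by blast+
  have large: "(t - 1) * k < x"
    using less_nat_ceiling_divide[of "r - 1" "(t - 1) * k" n] assms(2,6,7) by (simp add: mult.assoc)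
  have "card S \<le> x - 1" if "S \<subseteq> V" "independent_set ?R S" for S
  proof -
    have "card S < x"
      using card_red_independent_set_less[OF V blue_sym irr assms(4) large _ assms(11) that]
        assms(5,8) by simp
    then show ?thesis
      by simp
  qed
  moreover have "{} \<in> {S. S \<subseteq> V \<and> independent_set ?R S}"
    by (simp add: independent_set_def)
  ultimately show ?thesis
    unfolding independence_number_def using V by (subst Max_le_iff) auto
qed

end
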